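(* Let $q(z)$ be a monic real polynomial of degree $p$ with $q(1)=0$. Then for any polynomial $r(z)$ of degree $p-1$ and any $0<\mu<\ell$, there exists $\nu\in[\mu,\ell]$ such that $$\rho\big(q(z)-\nu\, r(z)\big)\ge\frac{\sqrt{\ell/\mu}-1}{\sqrt{\ell/\mu}+1}.$$
   Context: For a polynomial $s(z)$, $\rho(s)$ denotes the maximum modulus of a (complex) root of $s$. *)

theory Defs
  imports "HOL-Computational_Algebra.Polynomial" Complex_Main
begin

definition rho :: "complex poly \<Rightarrow> real" where
  "rho s = Max (norm ` {z. poly s z = 0})"

end

theory Submission
  imports Defs "HOL-Complex_Analysis.Complex_Analysis"
begin

text \<open>
  Suppose every root of \<open>q - \<nu> r\<close>, \<open>\<mu> \<le> \<nu> \<le> L\<close>, had modulus less than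
  \<open>R = (sqrt \<kappa> - 1) / (sqrt \<kappa> + 1)\<close>, where \<open>\<kappa> = L / \<mu>\<close>. With \<open>a = (L + \<mu>) / 2\<close> and
  \<open>b = (L - \<mu>) / 2\<close>, the rational function \<open>w = b r / (q - a r)\<close> then omits the real rays
  \<open>(-\<infinity>, -1]\<close> and \<open>[1, \<infinity>)\<close> on \<open>|z| \<ge> R\<close>: a value \<open>w z = x\<close> with \<open>|x| \<ge> 1\<close> would make \<open>z\<close>
  a root for \<open>\<nu> = a + b / x\<close>. Since \<open>deg r < deg q\<close>, \<open>v \<mapsto> w (1 / v)\<close> vanishes at \<open>0\<close>;
  composed with a map of the slit plane into the unit disc it is a holomorphic function of
  modulus \<open>< 1\<close> near the closed disc of radius \<open>1 / R\<close>, so by Schwarz's lemma its value at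
  \<open>1\<close> has modulus \<open>< R\<close>. But \<open>q 1 = 0\<close> gives \<open>w 1 = -b / a = (1 - \<kappa>) / (1 + \<kappa>)\<close>, which
  that map sends to \<open>(1 - sqrt \<kappa>) / (1 + sqrt \<kappa>)\<close>, of modulus exactly \<open>R\<close>.
\<close>

text \<open>The plane cut along the real rays \<open>(-\<infinity>, -1]\<close> and \<open>[1, \<infinity>)\<close>.\<close>

definition slit_plane :: "complex set" where
  "slit_plane = {u. 1 - u^2 \<notin> \<real>\<^sub>\<le>\<^sub>0}"

text \<open>The inverse of \<open>w \<mapsto> 2 w / (1 + w\<^sup>2)\<close> that maps \<^const>\<open>slit_plane\<close> into the unit disc.\<close>

definition slit_to_disc :: "complex \<Rightarrow> complex" where
  "slit_to_disc u = u / (1 + csqrt (1 - u^2))"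

lemma zero_in_slit_plane [simp]: "0 \<in> slit_plane"
  by (simp add: slit_plane_def)

lemma open_slit_plane: "open slit_plane"
proof -
  have "open ((\<lambda>u::complex. 1 - u^2) -` (- \<real>\<^sub>\<le>\<^sub>0))"
    by (intro continuous_open_vimage) (auto intro!: continuous_intros)
  moreover have "slit_plane = (\<lambda>u. 1 - u^2) -` (- \<real>\<^sub>\<le>\<^sub>0)"
    by (auto simp: slit_plane_def)
  ultimately show ?thesis by simp
qed

lemma notin_slit_plane_imp_real:
  assumes "u \<notin> slit_plane"
  obtains x where "u = of_real x" "1 \<le> \<bar>x\<bar>"
proof -
  obtain t where t: "1 - u^2 = of_real t" "t \<le> 0"
    using assms by (auto simp: slit_plane_def elim: nonpos_Reals_cases)
  define c where "c = sqrt (1 - t)"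
  have "c \<ge> 1" using t(2) by (simp add: c_def)
  have "u^2 = of_real (c^2)" using t by (simp add: c_def algebra_simps)
  then have "(u - of_real c) * (u + of_real c) = 0"
    by (simp add: algebra_simps power2_eq_square)
  then have "u = of_real c \<or> u = of_real (- c)"
    by (auto simp: add_eq_0_iff)
  with \<open>c \<ge> 1\<close> show ?thesis
    using that[of c] that[of "- c"] by auto
qed

lemma Re_csqrt_pos_on_slit_plane:
  assumes "u \<in> slit_plane"
  shows "Re (csqrt (1 - u^2)) > 0"
proof (rule ccontr)
  assume "\<not> ?thesis"
  then have "Re (csqrt (1 - u^2)) = 0"
    using Re_csqrt[of "1 - u^2"] by linarith
  then have "(csqrt (1 - u^2))^2 \<in> \<real>\<^sub>\<le>\<^sub>0"
    by (simp add: complex_nonpos_Reals_iff power2_eq_square)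
  with assms show False by (simp add: slit_plane_def)
qed

lemma holomorphic_on_slit_to_disc: "slit_to_disc holomorphic_on slit_plane"
proof -
  have "1 + csqrt (1 - u^2) \<noteq> 0" if "u \<in> slit_plane" for u
  proof -
    have "Re (1 + csqrt (1 - u^2)) > 0"
      using Re_csqrt_pos_on_slit_plane[OF that] by (simp only: plus_complex.sel one_complex.sel)
    then show ?thesis by force
  qed
  then show ?thesis
    unfolding slit_to_disc_def by (intro holomorphic_intros) (auto simp: slit_plane_def)
qed

lemma norm_slit_to_disc_less_1:
  assumes "u \<in> slit_plane"
  shows "norm (slit_to_disc u) < 1"
proof -
  define s where "s = csqrt (1 - u^2)"
  have "Re s > 0"
    unfolding s_def by (rule Re_csqrt_pos_on_slit_plane[OF assms])
  have "(norm (1 - s))^2 = (1 - Re s)^2 + (Im s)^2" "(norm (1 + s))^2 = (1 + Re s)^2 + (Im s)^2"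
    by (simp_all add: cmod_power2)
  then have "(norm (1 - s))^2 < (norm (1 + s))^2"
    using \<open>Re s > 0\<close> by (simp add: power2_eq_square algebra_simps)
  then have "norm (1 - s) < norm (1 + s)"
    by (rule power2_less_imp_less) simp
  have "s^2 = 1 - u^2"
    by (simp add: s_def)
  then have "u^2 = (1 - s) * (1 + s)"
    by (simp add: algebra_simps power2_eq_square)
  then have "(norm u)^2 = norm (1 - s) * norm (1 + s)"
    by (simp add: norm_mult flip: norm_power)
  also have "\<dots> < (norm (1 + s))^2"
  proof -
    have "norm (1 + s) > 0"
      using \<open>norm (1 - s) < norm (1 + s)\<close> norm_ge_zero le_less_trans by blast
    with \<open>norm (1 - s) < norm (1 + s)\<close> show ?thesis
      by (simp add: power2_eq_square mult_strict_right_mono)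
  qed
  finally have "norm u < norm (1 + s)"
    by (rule power2_less_imp_less) simp
  then show ?thesis
    by (simp add: slit_to_disc_def s_def norm_divide divide_less_eq)
qed

lemma slit_to_disc_real:
  fixes k :: real
  assumes "0 \<le> k"
  shows "slit_to_disc (of_real ((1 - k^2) / (1 + k^2))) = of_real ((1 - k) / (1 + k))"
proof -
  define x where "x = (1 - k^2) / (1 + k^2)"
  define c where "c = 2 * k / (1 + k^2)"
  have pos: "1 + k^2 > 0"
    by (simp add: add_pos_nonneg)
  have "1 - x^2 = ((1 + k^2)^2 - (1 - k^2)^2) / (1 + k^2)^2"
    using pos by (simp add: x_def power_divide diff_divide_eq_iff)
  also have "(1 + k^2)^2 - (1 - k^2)^2 = (2 * k)^2"
    by (simp add: power2_eq_square algebra_simps)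
  finally have "1 - x^2 = c^2"
    by (simp add: c_def power_divide)
  then have "csqrt (1 - (of_real x)^2) = of_real c"
    using assms pos csqrt_of_real[of "1 - x^2"] by (simp add: c_def)
  have "1 + c = (1 + k)^2 / (1 + k^2)"
    using pos by (simp add: c_def field_simps power2_eq_square)
  then have "x / (1 + c) = (1 - k^2) / (1 + k)^2"
    using pos by (simp add: x_def)
  also have "\<dots> = ((1 - k) * (1 + k)) / ((1 + k) * (1 + k))"
    by (simp add: power2_eq_square algebra_simps)
  also have "\<dots> = (1 - k) / (1 + k)"
    using assms by simp
  finally have "complex_of_real (x / (1 + c)) = of_real ((1 - k) / (1 + k))"
    by (rule arg_cong)
  with \<open>csqrt (1 - (of_real x)^2) = of_real c\<close> show ?thesis
    by (simp add: slit_to_disc_def flip: x_def)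
qed

lemma cball_subset_open_imp_larger_ball_subset:
  fixes a :: "'a::{real_normed_vector, heine_borel}"
  assumes "open S" "cball a r \<subseteq> S" "0 \<le> r"
  obtains \<epsilon> where "\<epsilon> > 0" "ball a (r + \<epsilon>) \<subseteq> S"
proof -
  obtain \<epsilon> where "\<epsilon> > 0" and \<epsilon>: "(\<Union>x\<in>cball a r. ball x \<epsilon>) \<subseteq> S"
    using compact_subset_open_imp_ball_epsilon_subset[OF compact_cball assms(1,2)] by blast
  have "v \<in> S" if v: "v \<in> ball a (r + \<epsilon>)" for v
  proof (cases "dist a v \<le> r")
    case True
    then show ?thesis using \<epsilon> \<open>\<epsilon> > 0\<close> by force
  next
    case False
    define d where "d = dist a v"
    define x where "x = a + (r / d) *\<^sub>R (v - a)"
    have "d > r" "d < r + \<epsilon>"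
      using False v by (auto simp: d_def)
    have "norm (v - a) = d"
      by (simp add: d_def dist_norm norm_minus_commute)
    have "a - x = - ((r / d) *\<^sub>R (v - a))" "x - v = (r / d - 1) *\<^sub>R (v - a)"
      by (simp_all add: x_def algebra_simps)
    then have "dist a x = r / d * d" "dist x v = \<bar>r / d - 1\<bar> * d"
      using \<open>norm (v - a) = d\<close> \<open>d > r\<close> \<open>r \<ge> 0\<close> by (simp_all only: dist_norm norm_minus_cancel) simp_all
    then have "dist a x = r" "dist x v = d - r"
      using \<open>d > r\<close> \<open>r \<ge> 0\<close> by (simp_all add: algebra_simps)
    then show ?thesis
      using \<epsilon> \<open>d < r + \<epsilon>\<close> by force
  qed
  with \<open>\<epsilon> > 0\<close> that show ?thesis by blast
qed

lemma Schwarz_Lemma_cball_strict: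
  assumes holf: "f holomorphic_on S" and "open S" and "cball 0 r \<subseteq> S"
    and "f 0 = 0" and less_1: "\<And>z. z \<in> S \<Longrightarrow> norm (f z) < 1"
    and "0 < r" "norm z \<le> r" "z \<noteq> 0"
  shows "norm (f z) < norm z / r"
proof -
  obtain \<epsilon> where "\<epsilon> > 0" and ball: "ball 0 (r + \<epsilon>) \<subseteq> S"
    using cball_subset_open_imp_larger_ball_subset[OF \<open>open S\<close> \<open>cball 0 r \<subseteq> S\<close>] \<open>0 < r\<close>
    by auto
  define t where "t = r + \<epsilon>"
  have "t > 0" using \<open>0 < r\<close> \<open>\<epsilon> > 0\<close> by (simp add: t_def)
  have in_S: "of_real t * w \<in> S" if "norm w < 1" for w
  proof -
    have "norm (of_real t * w) < t"
      using that \<open>t > 0\<close> by (simp add: norm_mult)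
    then show ?thesis
      using ball by (auto simp flip: t_def)
  qed
  have "(\<lambda>w. f (of_real t * w)) holomorphic_on ball 0 1"
    using in_S by (intro holomorphic_on_compose_gen[OF _ holf, unfolded o_def]) (auto intro: holomorphic_intros)
  moreover have "norm (z / of_real t) < 1"
  proof -
    have "norm z < t" using \<open>norm z \<le> r\<close> \<open>\<epsilon> > 0\<close> by (simp add: t_def)
    then show ?thesis using \<open>t > 0\<close> by (simp add: norm_divide)
  qed
  ultimately have "norm (f (of_real t * (z / of_real t))) \<le> norm (z / of_real t)"
    using in_S less_1 \<open>f 0 = 0\<close> by (intro Schwarz_Lemma(1)) auto
  also have "\<dots> = norm z / t"
    using \<open>t > 0\<close> by (simp add: norm_divide)
  also have "\<dots> < norm z / r"
    using \<open>z \<noteq> 0\<close> \<open>0 < r\<close> \<open>\<epsilon> > 0\<close> by (simp add: t_def divide_strict_left_mono)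
  finally show ?thesis
    using \<open>t > 0\<close> by simp
qed

lemma norm_root_le_rho:
  assumes "s \<noteq> 0" "poly s z = 0"
  shows "norm z \<le> rho s"
  unfolding rho_def using assms by (intro Max_ge) (auto intro: poly_roots_finite)

lemma poly_reflect_poly_nonzero_iff:
  fixes Q :: "'a::field poly"
  assumes "Q \<noteq> 0"
  shows "poly (reflect_poly Q) v \<noteq> 0 \<longleftrightarrow> v = 0 \<or> poly Q (inverse v) \<noteq> 0"
  using assms by (cases "v = 0") (simp_all add: poly_reflect_poly_nz)

lemma holomorphic_on_rational_at_inverse:
  fixes P Q :: "complex poly"
  assumes "degree P < degree Q"
  shows "(\<lambda>v. if v = 0 then 0 else poly P (inverse v) / poly Q (inverse v))
           holomorphic_on {v. poly (reflect_poly Q) v \<noteq> 0}"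
proof (rule holomorphic_transform)
  define m where "m = degree Q - degree P"
  show "(\<lambda>v. v ^ m * poly (reflect_poly P) v / poly (reflect_poly Q) v)
          holomorphic_on {v. poly (reflect_poly Q) v \<noteq> 0}"
    by (intro holomorphic_intros) auto
  fix v :: complex
  assume "v \<in> {v. poly (reflect_poly Q) v \<noteq> 0}"
  moreover have "v ^ m * v ^ degree P = v ^ degree Q"
    using assms by (simp add: m_def flip: power_add)
  ultimately show "v ^ m * poly (reflect_poly P) v / poly (reflect_poly Q) v
      = (if v = 0 then 0 else poly P (inverse v) / poly Q (inverse v))"
    using assms by (auto simp: m_def poly_reflect_poly_nz field_simps)
qed

lemma ratio_in_slit_plane:
  fixes q r :: complex and a b :: real
  assumes "0 \<le> b" and no_root: "\<And>\<nu>. \<nu> \<in> {a - b..a + b} \<Longrightarrow> q \<noteq> of_real \<nu> * r"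
  shows "q - of_real a * r \<noteq> 0" and "of_real b * r / (q - of_real a * r) \<in> slit_plane"
proof -
  show nz: "q - of_real a * r \<noteq> 0"
    using no_root[of a] \<open>0 \<le> b\<close> by simp
  show "of_real b * r / (q - of_real a * r) \<in> slit_plane"
  proof (rule ccontr)
    assume "\<not> ?thesis"
    then obtain x where x: "of_real b * r / (q - of_real a * r) = of_real x" "1 \<le> \<bar>x\<bar>"
      by (rule notin_slit_plane_imp_real)
    then have "x \<noteq> 0" by auto
    have "q = of_real (a + b / x) * r"
      using x(1) nz \<open>x \<noteq> 0\<close> by (simp add: field_simps)
    moreover have "\<bar>b / x\<bar> \<le> b"
      using mult_left_mono[OF x(2) \<open>0 \<le> b\<close>] \<open>0 \<le> b\<close> \<open>x \<noteq> 0\<close>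
      by (simp add: abs_div pos_divide_le_eq)
    then have "a + b / x \<in> {a - b..a + b}"
      by (auto simp: abs_le_iff simp del: abs_divide)
    ultimately show False
      using no_root by blast
  qed
qed

lemma norm_slit_to_disc_rational_less:
  fixes P S :: "complex poly"
  assumes "degree P < degree S" "0 < R"
    and outside: "\<And>z. R \<le> norm z \<Longrightarrow> poly S z \<noteq> 0 \<and> poly P z / poly S z \<in> slit_plane"
    and "R \<le> norm z"
  shows "norm (slit_to_disc (poly P z / poly S z)) < R / norm z"
proof -
  define h where "h v = (if v = 0 then 0 else poly P (inverse v) / poly S (inverse v))" for v
  define E where "E = {v. poly (reflect_poly S) v \<noteq> 0}"
  define \<Omega> where "\<Omega> = E \<inter> h -` slit_plane"
  have "S \<noteq> 0"
    using \<open>degree P < degree S\<close> by auto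
  have hol_h: "h holomorphic_on E"
    unfolding h_def E_def by (rule holomorphic_on_rational_at_inverse) fact
  have "open E"
    unfolding E_def by (intro open_Collect_neq continuous_intros)
  then have "open \<Omega>"
    unfolding \<Omega>_def using hol_h open_slit_plane
    by (intro continuous_open_preimage holomorphic_on_imp_continuous_on)
  have "cball 0 (inverse R) \<subseteq> \<Omega>"
  proof
    fix v :: complex
    assume "v \<in> cball 0 (inverse R)"
    show "v \<in> \<Omega>"
    proof (cases "v = 0")
      case True
      then show ?thesis using \<open>S \<noteq> 0\<close> by (simp add: \<Omega>_def E_def h_def)
    next
      case False
      then have "R \<le> norm (inverse v)"
        using le_imp_inverse_le[of "norm v" "inverse R"] \<open>v \<in> cball 0 (inverse R)\<close> \<open>0 < R\<close>
        by (simp add: norm_inverse)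
      then show ?thesis
        using outside[of "inverse v"] False \<open>S \<noteq> 0\<close>
        by (simp add: \<Omega>_def E_def h_def poly_reflect_poly_nonzero_iff)
    qed
  qed
  define G where "G = slit_to_disc \<circ> h"
  have "G holomorphic_on \<Omega>"
    unfolding G_def \<Omega>_def
    by (rule holomorphic_on_compose_gen[OF holomorphic_on_subset[OF hol_h] holomorphic_on_slit_to_disc]) auto
  moreover have "norm (G v) < 1" if "v \<in> \<Omega>" for v
    using that norm_slit_to_disc_less_1 by (simp add: G_def \<Omega>_def)
  moreover have "G 0 = 0"
    by (simp add: G_def h_def slit_to_disc_def)
  moreover have "norm (inverse z) \<le> inverse R" "inverse z \<noteq> 0"
    using le_imp_inverse_le[OF \<open>R \<le> norm z\<close> \<open>0 < R\<close>] \<open>0 < R\<close> \<open>R \<le> norm z\<close>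
    by (auto simp: norm_inverse)
  ultimately have "norm (G (inverse z)) < norm (inverse z) / inverse R"
    using \<open>open \<Omega>\<close> \<open>cball 0 (inverse R) \<subseteq> \<Omega>\<close> \<open>0 < R\<close>
    by (intro Schwarz_Lemma_cball_strict) auto
  then show ?thesis
    using \<open>inverse z \<noteq> 0\<close> by (simp add: G_def h_def norm_inverse divide_inverse mult.commute)
qed

lemma roots_in_ball_imp_norm_slit_to_disc_less:
  fixes Q P :: "complex poly" and \<mu> L R :: real
  assumes "degree P < degree Q" "poly Q 1 = 0" "\<mu> \<le> L" "0 < R" "R \<le> 1"
    and small_roots: "\<And>\<nu> z. \<nu> \<in> {\<mu>..L} \<Longrightarrow> poly Q z = of_real \<nu> * poly P z \<Longrightarrow> norm z < R"
  shows "norm (slit_to_disc (of_real ((\<mu> - L) / (\<mu> + L)))) < R"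
proof -
  define a where "a = (\<mu> + L) / 2"
  define b where "b = (L - \<mu>) / 2"
  define S where "S = Q - smult (of_real a) P"
  have "{a - b..a + b} = {\<mu>..L}" "0 \<le> b"
    using \<open>\<mu> \<le> L\<close> by (simp_all add: a_def b_def field_simps)
  have "degree (- smult (of_real a) P) < degree Q"
    using \<open>degree P < degree Q\<close> degree_smult_le[of "of_real a" P] by simp
  then have "degree S = degree Q"
    using degree_add_eq_left[of "- smult (of_real a) P" Q] by (simp add: S_def)
  then have "degree (smult (of_real b) P) < degree S"
    using \<open>degree P < degree Q\<close> degree_smult_le[of "of_real b" P] by auto
  have outside: "poly S z \<noteq> 0 \<and> poly (smult (of_real b) P) z / poly S z \<in> slit_plane"
    if "R \<le> norm z" for z
  proof -
    have "poly Q z \<noteq> of_real \<nu> * poly P z" if "\<nu> \<in> {a - b..a + b}" for \<nu>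
      using small_roots[of \<nu> z] that \<open>R \<le> norm z\<close> \<open>{a - b..a + b} = {\<mu>..L}\<close> by auto
    then show ?thesis
      using ratio_in_slit_plane[OF \<open>0 \<le> b\<close>] by (simp add: S_def)
  qed
  have "poly P 1 \<noteq> 0"
    using small_roots[of \<mu> 1] \<open>poly Q 1 = 0\<close> \<open>\<mu> \<le> L\<close> \<open>R \<le> 1\<close> by auto
  moreover have "poly S 1 = - of_real a * poly P 1" "poly S 1 \<noteq> 0"
    using \<open>poly Q 1 = 0\<close> outside[of 1] \<open>R \<le> 1\<close> by (simp_all add: S_def)
  ultimately have "poly (smult (of_real b) P) 1 / poly S 1 = of_real (- b / a)"
    by simp
  also have "- b / a = (\<mu> - L) / (\<mu> + L)"
    by (simp add: a_def b_def divide_simps algebra_simps)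
  finally show ?thesis
    using norm_slit_to_disc_rational_less[OF \<open>degree (smult (of_real b) P) < degree S\<close> \<open>0 < R\<close> outside, of 1]
      \<open>R \<le> 1\<close> by simp
qed

lemma norm_slit_to_disc_ratio:
  fixes \<mu> L :: real
  assumes "0 < \<mu>" "\<mu> \<le> L"
  shows "norm (slit_to_disc (of_real ((\<mu> - L) / (\<mu> + L)))) = (sqrt (L / \<mu>) - 1) / (sqrt (L / \<mu>) + 1)"
proof -
  define k where "k = sqrt (L / \<mu>)"
  have "k \<ge> 1" "k^2 = L / \<mu>"
    using assms by (simp_all add: k_def)
  moreover have "(\<mu> - L) / (\<mu> + L) = (1 - L / \<mu>) / (1 + L / \<mu>)"
    using assms(1) by (simp add: divide_simps)
  ultimately have "slit_to_disc (of_real ((\<mu> - L) / (\<mu> + L))) = of_real ((1 - k) / (1 + k))"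
    using slit_to_disc_real[of k] by simp
  then show ?thesis
    using \<open>k \<ge> 1\<close> by (simp only: norm_of_real flip: k_def) (simp add: abs_div)
qed

lemma degree_map_poly_of_real [simp]:
  "degree (map_poly (of_real :: real \<Rightarrow> 'a::real_algebra_1) p) = degree p"
  by (rule degree_map_poly) simp

lemma poly_map_poly_of_real:
  "poly (map_poly of_real p) (of_real x) = (of_real (poly p x) :: 'a::{real_algebra_1, comm_ring_1})"
  by (induction p) (auto simp: map_poly_pCons)

lemma map_poly_of_real_diff_smult:
  "map_poly of_real (p - smult c q)
     = map_poly of_real p - smult (of_real c) (map_poly (of_real :: real \<Rightarrow> 'a::{real_algebra_1, comm_ring_1}) q)"
  by (intro poly_eqI) (simp add: coeff_map_poly)

theorem theorem25:
  fixes q r :: "real poly" and p :: nat and \<mu> L :: real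
  assumes "lead_coeff q = 1" and "degree q = p" and "poly q 1 = 0"
    and "r \<noteq> 0" and "degree r = p - 1"
    and "0 < \<mu>" and "\<mu> < L"
  shows "\<exists>\<nu>\<in>{\<mu>..L}.
           rho (map_poly of_real (q - smult \<nu> r))
             \<ge> (sqrt (L / \<mu>) - 1) / (sqrt (L / \<mu>) + 1)"
proof (rule ccontr)
  assume small_rho: "\<not> ?thesis"
  define k where "k = sqrt (L / \<mu>)"
  define R where "R = (k - 1) / (k + 1)"
  define Q where "Q = map_poly complex_of_real q"
  define P where "P = map_poly complex_of_real r"
  have "k > 1"
    using assms(6,7) by (simp add: k_def)
  then have "0 < R" "R < 1"
    by (simp_all add: R_def)
  have "degree q \<noteq> 0"
  proof
    assume "degree q = 0"
    then have "q = [:1:]"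
      using assms(1) by (metis degree_0_id)
    with assms(3) show False by simp
  qed
  then have "degree P < degree Q"
    using assms(2,5) by (simp add: P_def Q_def)
  have "norm z < R" if "\<nu> \<in> {\<mu>..L}" "poly Q z = of_real \<nu> * poly P z" for \<nu> z
  proof -
    have "Q - smult (of_real \<nu>) P \<noteq> 0"
      using \<open>degree P < degree Q\<close> degree_smult_le[of "of_real \<nu>" P] by auto
    then have "norm z \<le> rho (map_poly of_real (q - smult \<nu> r))"
      using that(2) by (intro norm_root_le_rho) (simp_all add: map_poly_of_real_diff_smult P_def Q_def)
    also have "\<dots> < R"
      using small_rho that(1) by (auto simp: R_def k_def not_le)
    finally show ?thesis .
  qed
  then have "norm (slit_to_disc (of_real ((\<mu> - L) / (\<mu> + L)))) < R"
    using \<open>poly q 1 = 0\<close> \<open>degree P < degree Q\<close> \<open>\<mu> < L\<close> \<open>0 < R\<close> \<open>R < 1\<close>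
    by (intro roots_in_ball_imp_norm_slit_to_disc_less)
      (auto simp: Q_def poly_map_poly_of_real[of q 1, simplified])
  then show False
    using norm_slit_to_disc_ratio assms(6,7) by (simp add: R_def k_def)
qed

end
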